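(* Let $q\ge2$ and let $f$ be a $(q^2-1,1)$-coloring of $H(q+1,q)$ whose color-$1$ class is a $1$-perfect code and whose color-$2$ class can be partitioned into lines. Then for every positive integer $p$ and every $t\in\{0,\dots,p-1\}$ there exists a $\big((q^2-1)(p-t),\ (q^2-1)t+p\big)$-coloring of $H(q+1,pq)$; its main eigenvalue is $q(p-1)-1$.
   Context: The Hamming graph $H(n,q)$ has vertex set $\mathbb{Z}_q^n$, two vertices adjacent iff they differ in exactly one coordinate. A line ($1$-face) is a set of $q$ vertices obtained by fixing all coordinates but one. A $(b,c)$-coloring of $H(n,q)$ is a surjective map onto $\{1,2\}$ in which each color-1 vertex has exactly $b$ neighbours of color 2 and each color-2 vertex has exactly $c$ neighbours of color 1; its main eigenvalue is $n(q-1)-(b+c)$. A $1$-perfect code is a set $C$ of vertices such that every radius-$1$ Hamming ball contains exactly one element of $C$. *)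

theory Defs
  imports Main
begin

definition hvert :: "nat \<Rightarrow> nat \<Rightarrow> (nat \<Rightarrow> nat) set" where
  "hvert n q = {x. (\<forall>i<n. x i < q) \<and> (\<forall>i. n \<le> i \<longrightarrow> x i = 0)}"

definition hadj :: "nat \<Rightarrow> (nat \<Rightarrow> nat) \<Rightarrow> (nat \<Rightarrow> nat) \<Rightarrow> bool" where
  "hadj n x y = (card {i. i < n \<and> x i \<noteq> y i} = 1)"

definition is_coloring :: "nat \<Rightarrow> nat \<Rightarrow> nat \<Rightarrow> nat \<Rightarrow> ((nat \<Rightarrow> nat) \<Rightarrow> nat) \<Rightarrow> bool" where
  "is_coloring n q b c f =
     (f ` hvert n q = {1, 2} \<and>
      (\<forall>x\<in>hvert n q. f x = 1 \<longrightarrow> card {y\<in>hvert n q. hadj n x y \<and> f y = 2} = b) \<and>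
      (\<forall>x\<in>hvert n q. f x = 2 \<longrightarrow> card {y\<in>hvert n q. hadj n x y \<and> f y = 1} = c))"

definition main_eigenvalue :: "nat \<Rightarrow> nat \<Rightarrow> nat \<Rightarrow> nat \<Rightarrow> int" where
  "main_eigenvalue n q b c = int n * (int q - 1) - (int b + int c)"

definition is_line :: "nat \<Rightarrow> nat \<Rightarrow> (nat \<Rightarrow> nat) set \<Rightarrow> bool" where
  "is_line n q L = (\<exists>i<n. \<exists>x\<in>hvert n q. L = {x(i := a) | a. a < q})"

definition perfect_code :: "nat \<Rightarrow> nat \<Rightarrow> (nat \<Rightarrow> nat) set \<Rightarrow> bool" where
  "perfect_code n q C = (C \<subseteq> hvert n q \<and>
     (\<forall>x\<in>hvert n q. card {y\<in>C. y = x \<or> hadj n x y} = 1))"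

definition partitionable_into_lines :: "nat \<Rightarrow> nat \<Rightarrow> (nat \<Rightarrow> nat) set \<Rightarrow> bool" where
  "partitionable_into_lines n q S = (\<exists>P. (\<forall>L\<in>P. is_line n q L) \<and>
     (\<forall>L1\<in>P. \<forall>L2\<in>P. L1 \<noteq> L2 \<longrightarrow> L1 \<inter> L2 = {}) \<and> \<Union>P = S)"

end

theory Submission
  imports Defs "HOL-Number_Theory.Cong"
begin

(* Write a vertex y of H(q+1,pq) as y_i = q k_i + r_i with r_i < q; its residue vector r is a
   vertex of H(q+1,q). Colour y with 1 if f r = 1. Otherwise r lies on a unique line of the
   partition, say in direction d, and y gets colour 1 iff the sum of the k_j over j \<noteq> d is
   less than t modulo p.
   A neighbour of y changes a single coordinate i to q k + r'; group the neighbours by (i, r').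
   If f(r(i := r')) = 1, all of them have colour 1. If r(i := r') lies on a partition line in
   direction i, this is the line through r, and all of them have the colour of y. Otherwise the
   sum deciding their colour runs through all residues mod p as k does, so t of them have
   colour 1 and p - t colour 2. Counting these groups with the (q^2-1,1)-regularity of f
   gives the parameters. *)

lemma hvert_fun_upd: "x \<in> hvert n m \<Longrightarrow> i < n \<Longrightarrow> a < m \<Longrightarrow> x(i := a) \<in> hvert n m"
  by (auto simp: hvert_def)

lemma hvert_mono: "m \<le> m' \<Longrightarrow> hvert n m \<subseteq> hvert n m'"
  by (auto simp: hvert_def)

lemma hadj_iff_fun_upd:
  assumes x: "x \<in> hvert n m" and z: "z \<in> hvert n m"
  shows "hadj n x z \<longleftrightarrow> (\<exists>i<n. \<exists>a. a \<noteq> x i \<and> z = x(i := a))"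
proof
  assume "hadj n x z"
  then obtain i where "{j. j < n \<and> x j \<noteq> z j} = {i}"
    unfolding hadj_def by (metis card_1_singletonE)
  then have differ: "j < n \<and> x j \<noteq> z j \<longleftrightarrow> j = i" for j
    by (simp add: set_eq_iff)
  have "z = x(i := z i)"
  proof
    fix j show "z j = (x(i := z i)) j"
      using differ[of j] x z by (cases "j < n") (auto simp: hvert_def)
  qed
  moreover have "i < n" "z i \<noteq> x i"
    using differ[of i] by auto
  ultimately show "\<exists>i<n. \<exists>a. a \<noteq> x i \<and> z = x(i := a)" by blast
next
  assume "\<exists>i<n. \<exists>a. a \<noteq> x i \<and> z = x(i := a)"
  then obtain i a where "i < n" "a \<noteq> x i" "z = x(i := a)" by blast
  then have "{j. j < n \<and> x j \<noteq> z j} = {i}" by auto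
  then show "hadj n x z" by (simp add: hadj_def)
qed

lemma fun_upd_eq_fun_upd_iff:
  assumes "a \<noteq> x i"
  shows "x(i := a) = x(j := b) \<longleftrightarrow> i = j \<and> a = b"
proof
  assume upd: "x(i := a) = x(j := b)"
  have "i = j"
  proof (rule ccontr)
    assume "i \<noteq> j"
    then have "(x(i := a)) i = x i" using upd by simp
    with assms show False by simp
  qed
  with upd show "i = j \<and> a = b" by (simp add: fun_upd_eqD)
qed simp

lemma card_hadj_neighbours:
  assumes x: "x \<in> hvert n m"
  shows "card {z \<in> hvert n m. hadj n x z \<and> R z}
       = (\<Sum>i<n. card {a. a < m \<and> a \<noteq> x i \<and> R (x(i := a))})"
proof -
  let ?S = "SIGMA i:{..<n}. {a. a < m \<and> a \<noteq> x i \<and> R (x(i := a))}"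
  have "{z \<in> hvert n m. hadj n x z \<and> R z} = (\<lambda>(i, a). x(i := a)) ` ?S"
  proof (intro equalityI subsetI)
    fix z assume "z \<in> {z \<in> hvert n m. hadj n x z \<and> R z}"
    then obtain i a where "i < n" "a \<noteq> x i" "z = x(i := a)" "z \<in> hvert n m" "R z"
      using hadj_iff_fun_upd[OF x] by blast
    then show "z \<in> (\<lambda>(i, a). x(i := a)) ` ?S"
      by (intro image_eqI[of _ _ "(i, a)"]) (auto simp: hvert_def)
  next
    fix z assume "z \<in> (\<lambda>(i, a). x(i := a)) ` ?S"
    then show "z \<in> {z \<in> hvert n m. hadj n x z \<and> R z}"
      using hadj_iff_fun_upd[OF x] hvert_fun_upd[OF x] by auto
  qed
  moreover have "inj_on (\<lambda>(i, a). x(i := a)) ?S"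
    by (rule inj_onI) (auto simp: fun_upd_eq_fun_upd_iff)
  ultimately show ?thesis
    by (simp add: card_image card_SigmaI)
qed

lemma card_less_mult_by_residue:
  assumes "0 < (q::nat)"
  shows "card {a. a < p * q \<and> \<Phi> a} = (\<Sum>r<q. card {k. k < p \<and> \<Phi> (q * k + r)})"
proof -
  let ?S = "SIGMA r:{..<q}. {k. k < p \<and> \<Phi> (q * k + r)}"
  have "{a. a < p * q \<and> \<Phi> a} = (\<lambda>(r, k). q * k + r) ` ?S"
  proof (intro equalityI subsetI)
    fix a assume "a \<in> {a. a < p * q \<and> \<Phi> a}"
    then have "(a mod q, a div q) \<in> ?S"
      using assms by (auto simp: less_mult_imp_div_less mult.commute)
    then show "a \<in> (\<lambda>(r, k). q * k + r) ` ?S"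
      by (rule rev_image_eqI) simp
  next
    fix a assume "a \<in> (\<lambda>(r, k). q * k + r) ` ?S"
    then obtain r k where "r < q" "k < p" "\<Phi> (q * k + r)" "a = q * k + r" by auto
    moreover have "q * k + r < p * q"
      using \<open>r < q\<close> \<open>k < p\<close> mult_le_mono1[of "Suc k" p q] by (simp add: mult.commute)
    ultimately show "a \<in> {a. a < p * q \<and> \<Phi> a}" by simp
  qed
  moreover have "inj_on (\<lambda>(r, k). q * k + r) ?S"
  proof (rule inj_onI, clarsimp)
    fix r k s l assume "r < q" "s < q" "q * k + r = q * l + s"
    then have "(q * k + r) div q = (q * l + s) div q" "(q * k + r) mod q = (q * l + s) mod q"
      by simp_all
    with \<open>r < q\<close> \<open>s < q\<close> show "r = s \<and> k = l" by simp
  qed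
  ultimately show ?thesis
    by (simp add: card_image card_SigmaI)
qed

lemma bij_betw_add_mod: "bij_betw (\<lambda>k. (K + k) mod p) {..<p} {..<(p::nat)}"
proof (cases "p = 0")
  case False
  have "inj_on (\<lambda>k. (K + k) mod p) {..<p}"
  proof (rule inj_onI)
    fix k l assume "k \<in> {..<p}" "l \<in> {..<p}" "(K + k) mod p = (K + l) mod p"
    then have "[k = l] (mod p)"
      by (simp add: cong_def[symmetric] cong_add_lcancel_nat)
    with \<open>k \<in> {..<p}\<close> \<open>l \<in> {..<p}\<close> show "k = l"
      by (auto intro: cong_less_modulus_unique_nat)
  qed
  moreover have "(\<lambda>k. (K + k) mod p) ` {..<p} \<subseteq> {..<p}"
    using False by auto
  ultimately show ?thesis
    by (simp add: bij_betw_def card_subset_eq card_image)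
qed simp

lemma card_add_mod_in:
  "card {k. k < p \<and> (K + k) mod p \<in> A} = card (A \<inter> {..<(p::nat)})"
proof -
  let ?h = "\<lambda>k. (K + k) mod p"
  have inj: "inj_on ?h {..<p}" and onto: "?h ` {..<p} = {..<p}"
    using bij_betw_add_mod unfolding bij_betw_def by blast+
  have "?h ` {k. k < p \<and> ?h k \<in> A} = A \<inter> ?h ` {..<p}"
    by auto
  moreover have "inj_on ?h {k. k < p \<and> ?h k \<in> A}"
    using inj by (rule inj_on_subset) auto
  ultimately show ?thesis
    using onto by (metis card_image)
qed

lemma card_other_values:
  assumes "b < m"
  shows "card {a::nat. a < m \<and> a \<noteq> b} = m - 1"
proof -
  have "{a. a < m \<and> a \<noteq> b} = {..<m} - {b}" by auto
  with assms show ?thesis by simp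
qed

lemma mult_add_eq_iff_div_mod:
  "r < (q::nat) \<Longrightarrow> q * k + r = a \<longleftrightarrow> r = a mod q \<and> k = a div q"
  by auto

lemma power2_minus_1_nat: "(q::nat)^2 - 1 = (q + 1) * (q - 1)"
  by (cases q) (simp_all add: power2_eq_square)

lemma is_coloring_saturated_neighbour:
  assumes f: "is_coloring n q (n * (q - 1)) c f"
    and x: "x \<in> hvert n q" "f x = 1" and i: "i < n" and a: "a < q" "a \<noteq> x i"
  shows "f (x(i := a)) = 2"
proof -
  define A where "A j = {b. b < q \<and> b \<noteq> x j \<and> f (x(j := b)) = 2}" for j
  define N where "N j = {b. b < q \<and> b \<noteq> x j}" for j
  have card_N: "card (N j) = q - 1" if "j < n" for j
    using x that card_other_values[of "x j" q] by (simp add: N_def hvert_def)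
  \<comment> \<open>each coordinate offers at most q - 1 colour-2 neighbours, and together they supply n (q - 1)\<close>
  have "(\<Sum>j<n. card (A j)) = (\<Sum>j<n. card (N j))"
    using f x card_hadj_neighbours[OF x(1), of "\<lambda>z. f z = 2"] card_N
    by (simp add: is_coloring_def A_def)
  then have "card (A i) = card (N i)"
    by (rule sum_mono_inv) (use i in \<open>auto intro: card_mono simp: A_def N_def\<close>)
  then have "A i = N i"
    by (intro card_subset_eq) (auto simp: A_def N_def)
  with a show ?thesis by (auto simp: A_def N_def)
qed

locale line_partitioned_coloring =
  fixes q :: nat and f :: "(nat \<Rightarrow> nat) \<Rightarrow> nat" and P :: "(nat \<Rightarrow> nat) set set"
  assumes coloring: "is_coloring (q + 1) q (q^2 - 1) 1 f"
    and lines: "\<forall>L\<in>P. is_line (q + 1) q L"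
    and disjoint: "\<forall>L1\<in>P. \<forall>L2\<in>P. L1 \<noteq> L2 \<longrightarrow> L1 \<inter> L2 = {}"
    and union: "\<Union>P = {x \<in> hvert (q + 1) q. f x = 2}"
begin

abbreviation n :: nat where "n \<equiv> q + 1"
abbreviation V :: "(nat \<Rightarrow> nat) set" where "V \<equiv> hvert n q"

lemma colour_cases: "x \<in> V \<Longrightarrow> f x = 1 \<or> f x = 2"
  using coloring by (auto simp: is_coloring_def)

lemma ex_colour:
  assumes "c = 1 \<or> c = 2"
  shows "\<exists>x\<in>V. f x = c"
proof -
  have "c \<in> f ` V"
    using assms coloring by (auto simp: is_coloring_def)
  then show ?thesis by blast
qed

lemma q_pos: "0 < q"
proof (rule ccontr)
  assume "\<not> 0 < q"
  then have "V = {}" by (auto simp: hvert_def)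
  then show False using coloring by (simp add: is_coloring_def)
qed

lemma colour_1_neighbour_colour_2:
  assumes "x \<in> V" "f x = 1" "i < n" "a < q" "a \<noteq> x i"
  shows "f (x(i := a)) = 2"
proof -
  have "is_coloring n q (n * (q - 1)) 1 f"
    using coloring by (simp only: power2_minus_1_nat)
  from is_coloring_saturated_neighbour[OF this assms] show ?thesis .
qed

lemma card_colour_1_neighbours:
  "x \<in> V \<Longrightarrow> f x = 2 \<Longrightarrow> (\<Sum>i<n. card {a. a < q \<and> a \<noteq> x i \<and> f (x(i := a)) = 1}) = 1"
  using coloring card_hadj_neighbours[of x n q "\<lambda>z. f z = 1"] by (simp add: is_coloring_def)

definition line_through :: "(nat \<Rightarrow> nat) \<Rightarrow> nat \<Rightarrow> (nat \<Rightarrow> nat) set" where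
  "line_through x d = {x(d := a) | a. a < q}"

(* Only meaningful for vertices of colour 2; by disjointness of the partition lines the
   choice is then unique. *)
definition line_dir :: "(nat \<Rightarrow> nat) \<Rightarrow> nat" where
  "line_dir x = (SOME d. d < n \<and> line_through x d \<in> P)"

lemma fun_upd_in_line_through: "a < q \<Longrightarrow> x(d := a) \<in> line_through x d"
  by (auto simp: line_through_def)

lemma self_in_line_through: "x \<in> V \<Longrightarrow> d < n \<Longrightarrow> x \<in> line_through x d"
  using fun_upd_in_line_through[of "x d" x d] by (simp add: hvert_def)

lemma line_through_agree: "z \<in> line_through x d \<Longrightarrow> j \<noteq> d \<Longrightarrow> z j = x j"
  by (auto simp: line_through_def)

lemma partition_line_member: "L \<in> P \<Longrightarrow> z \<in> L \<Longrightarrow> z \<in> V \<and> f z = 2"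
  using union by blast

lemma line_dir_in_partition:
  assumes "x \<in> V" "f x = 2"
  shows "line_dir x < n \<and> line_through x (line_dir x) \<in> P"
proof -
  obtain L where L: "L \<in> P" "x \<in> L" using union assms by blast
  then obtain d w where "d < n" "L = {w(d := a) | a. a < q}"
    using lines by (auto simp: is_line_def)
  with L have "d < n \<and> line_through x d \<in> P"
    by (auto simp: line_through_def)
  then show ?thesis
    unfolding line_dir_def by (rule someI)
qed

lemma colour_2_along_line: "x \<in> V \<Longrightarrow> f x = 2 \<Longrightarrow> a < q \<Longrightarrow> f (x(line_dir x := a)) = 2"
  using line_dir_in_partition fun_upd_in_line_through partition_line_member by blast

lemma line_dir_along_line:
  assumes x: "x \<in> V" "f x = 2" and a: "a < q"
  shows "line_dir (x(line_dir x := a)) = line_dir x"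
proof (cases "a = x (line_dir x)")
  case False
  let ?d = "line_dir x" and ?z = "x(line_dir x := a)"
  have L: "line_through x ?d \<in> P" and d: "?d < n"
    using line_dir_in_partition[OF x] by auto
  have z: "?z \<in> line_through x ?d"
    using a by (rule fun_upd_in_line_through)
  then have zV: "?z \<in> V" "f ?z = 2"
    using partition_line_member[OF L] by auto
  have Lz: "line_through ?z (line_dir ?z) \<in> P" "line_dir ?z < n"
    using line_dir_in_partition[OF zV] by auto
  then have "?z \<in> line_through ?z (line_dir ?z)"
    using zV by (simp add: self_in_line_through)
  with z L Lz(1) disjoint have "line_through ?z (line_dir ?z) = line_through x ?d"
    by blast
  with self_in_line_through[OF x(1) d] have x_on_Lz: "x \<in> line_through ?z (line_dir ?z)"
    by simp
  show ?thesis
  proof (rule ccontr)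
    assume "line_dir ?z \<noteq> ?d"
    then have "x ?d = ?z ?d" by (intro line_through_agree[OF x_on_Lz]) simp
    with False show False by simp
  qed
qed simp

lemma line_dir_fun_upd_back:
  assumes x: "x \<in> V" and i: "i < n" and a: "a < q"
    and z: "f (x(i := a)) = 2" "line_dir (x(i := a)) = i"
  shows "f x = 2 \<and> line_dir x = i"
proof -
  let ?z = "x(i := a)"
  have zV: "?z \<in> V" using hvert_fun_upd[OF x i a] .
  have xi: "x i < q" using x i by (simp add: hvert_def)
  have "?z(line_dir ?z := x i) = x" using z(2) by simp
  then show ?thesis
    using colour_2_along_line[OF zV z(1) xi] line_dir_along_line[OF zV z(1) xi] z(2) by simp
qed

end

locale lifted_coloring = line_partitioned_coloring +
  fixes p t :: nat
  assumes t_less_p: "t < p"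
begin

abbreviation W :: "(nat \<Rightarrow> nat) set" where "W \<equiv> hvert n (p * q)"

definition residues :: "(nat \<Rightarrow> nat) \<Rightarrow> nat \<Rightarrow> nat" where
  "residues y = (\<lambda>i. y i mod q)"

definition div_sum :: "(nat \<Rightarrow> nat) \<Rightarrow> nat \<Rightarrow> nat" where
  "div_sum y d = (\<Sum>j\<in>{..<n} - {d}. y j div q)"

definition lift :: "(nat \<Rightarrow> nat) \<Rightarrow> nat" where
  "lift y = (if f (residues y) = 1 then 1
             else if div_sum y (line_dir (residues y)) mod p < t then 1 else 2)"

definition class_size :: "nat \<Rightarrow> nat" where
  "class_size c = (if c = 1 then t else p - t)"

definition fibre_count :: "(nat \<Rightarrow> nat) \<Rightarrow> nat \<Rightarrow> nat \<Rightarrow> nat \<Rightarrow> nat" where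
  "fibre_count y i r c = card {k. k < p \<and> q * k + r \<noteq> y i \<and> lift (y(i := q * k + r)) = c}"

lemma lift_cases: "lift y = 1 \<or> lift y = 2"
  by (simp add: lift_def)

lemma residues_in_V: "y \<in> W \<Longrightarrow> residues y \<in> V"
  using q_pos by (auto simp: hvert_def residues_def)

lemma residues_fun_upd: "r < q \<Longrightarrow> residues (y(i := q * k + r)) = (residues y)(i := r)"
  by (auto simp: residues_def)

lemma V_subset_W: "V \<subseteq> W"
  using t_less_p by (intro hvert_mono) simp

lemma residues_id:
  assumes x: "x \<in> V"
  shows "residues x = x"
proof -
  have "x i mod q = x i" for i
    using x by (cases "i < n") (auto simp: hvert_def)
  then show ?thesis
    by (simp add: residues_def)
qed

lemma div_less_p: "y \<in> W \<Longrightarrow> i < n \<Longrightarrow> y i div q < p"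
  by (auto simp: hvert_def less_mult_imp_div_less)

lemma div_sum_fun_upd_same: "div_sum (y(i := a)) i = div_sum y i"
  unfolding div_sum_def by (rule sum.cong) auto

lemma div_sum_fun_upd_other:
  assumes "i < n" "e \<noteq> i" "r < q"
  shows "div_sum (y(i := q * k + r)) e = (\<Sum>j\<in>{..<n} - {e} - {i}. y j div q) + k"
proof -
  have "i \<in> {..<n} - {e}" using assms by auto
  then have "div_sum (y(i := q * k + r)) e
      = (q * k + r) div q + (\<Sum>j\<in>{..<n} - {e} - {i}. (y(i := q * k + r)) j div q)"
    unfolding div_sum_def by (simp add: sum.remove)
  also have "(\<Sum>j\<in>{..<n} - {e} - {i}. (y(i := q * k + r)) j div q) = (\<Sum>j\<in>{..<n} - {e} - {i}. y j div q)"
    by (rule sum.cong) auto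
  also have "(q * k + r) div q = k"
    using assms by simp
  finally show ?thesis
    by (simp only: add.commute)
qed

lemma card_lift_neighbours:
  assumes y: "y \<in> W"
  shows "card {z \<in> W. hadj n y z \<and> lift z = c} = (\<Sum>i<n. \<Sum>r<q. fibre_count y i r c)"
  unfolding card_hadj_neighbours[OF y] fibre_count_def
  by (rule sum.cong[OF refl]) (rule card_less_mult_by_residue[OF q_pos])

lemma fibre_count_colour_1:
  assumes "r < q" and f1: "f ((residues y)(i := r)) = 1"
  shows "c \<noteq> 1 \<Longrightarrow> fibre_count y i r c = 0"
    and "r \<noteq> residues y i \<Longrightarrow> fibre_count y i r 1 = p"
proof -
  have lift1: "lift (y(i := q * k + r)) = 1" for k
    using f1 residues_fun_upd[OF \<open>r < q\<close>] by (simp add: lift_def)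
  then show "c \<noteq> 1 \<Longrightarrow> fibre_count y i r c = 0"
    by (simp add: fibre_count_def)
  assume "r \<noteq> residues y i"
  then have "{k. k < p \<and> q * k + r \<noteq> y i \<and> lift (y(i := q * k + r)) = 1} = {..<p}"
    using lift1 mult_add_eq_iff_div_mod[OF \<open>r < q\<close>] by (auto simp: residues_def)
  then show "fibre_count y i r 1 = p"
    by (simp add: fibre_count_def)
qed

lemma fibre_count_along_line:
  assumes y: "y \<in> W" and i: "i < n" and r: "r < q"
    and f2: "f ((residues y)(i := r)) = 2" and dir: "line_dir ((residues y)(i := r)) = i"
    and c: "c \<noteq> lift y"
  shows "fibre_count y i r c = 0"
proof -
  have "f (residues y) = 2 \<and> line_dir (residues y) = i"
    using line_dir_fun_upd_back[OF residues_in_V[OF y] i r f2 dir] .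
  then have "lift (y(i := q * k + r)) = lift y" for k
    using f2 dir residues_fun_upd[OF r] div_sum_fun_upd_same by (simp add: lift_def)
  with c show ?thesis
    by (simp add: fibre_count_def)
qed

lemma fibre_count_across_line:
  assumes y: "y \<in> W" and i: "i < n" and r: "r < q"
    and f2: "f ((residues y)(i := r)) = 2" and dir: "line_dir ((residues y)(i := r)) \<noteq> i"
    and c: "c = 1 \<or> c = 2"
  shows "fibre_count y i r c = class_size c - (if r = residues y i \<and> lift y = c then 1 else 0)"
proof -
  \<comment> \<open>the colour of y(i := q k + r) is decided by K + k modulo p\<close>
  define K where "K = (\<Sum>j\<in>{..<n} - {line_dir ((residues y)(i := r))} - {i}. y j div q)"
  define A where "A = (if c = 1 then {..<t} else {t..})"
  have lift_k: "lift (y(i := q * k + r)) = c \<longleftrightarrow> (K + k) mod p \<in> A" for k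
    using residues_fun_upd[OF r] f2 div_sum_fun_upd_other[OF i dir r] c
    by (auto simp: lift_def K_def A_def)
  have "card {k. k < p \<and> lift (y(i := q * k + r)) = c} = card (A \<inter> {..<p})"
    unfolding lift_k by (rule card_add_mod_in)
  also have "A \<inter> {..<p} = (if c = 1 then {..<t} else {t..<p})"
    using t_less_p by (auto simp: A_def)
  also have "card \<dots> = class_size c"
    by (simp add: class_size_def)
  finally have card_fibre: "card {k. k < p \<and> lift (y(i := q * k + r)) = c} = class_size c" .
  show ?thesis
  proof (cases "r = residues y i")
    case False
    then show ?thesis
      using card_fibre mult_add_eq_iff_div_mod[OF r] by (simp add: fibre_count_def residues_def)
  next
    case True
    let ?k = "y i div q"
    have "y(i := q * ?k + r) = y"
      using True by (simp add: residues_def)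
    then have "{k. k < p \<and> q * k + r \<noteq> y i \<and> lift (y(i := q * k + r)) = c}
        = {k. k < p \<and> lift (y(i := q * k + r)) = c} - {?k}"
      and "?k \<in> {k. k < p \<and> lift (y(i := q * k + r)) = c} \<longleftrightarrow> lift y = c"
      using True mult_add_eq_iff_div_mod[OF r] div_less_p[OF y i] by (auto simp: residues_def)
    then show ?thesis
      using True card_fibre by (simp add: fibre_count_def card_Diff_singleton_if)
  qed
qed

lemma card_lift_neighbours_residue_colour_1:
  assumes y: "y \<in> W" and f1: "f (residues y) = 1"
  shows "card {z \<in> W. hadj n y z \<and> lift z = 2} = (q^2 - 1) * (p - t)"
proof -
  let ?x = "residues y"
  have xV: "?x \<in> V" by (rule residues_in_V[OF y])
  have fibre: "fibre_count y i r 2 = (if r = ?x i then 0 else p - t)" if i: "i < n" and r: "r < q" for i r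
  proof (cases "r = ?x i")
    case True
    then show ?thesis using fibre_count_colour_1(1)[OF r] f1 by simp
  next
    case False
    have f2: "f (?x(i := r)) = 2"
      using colour_1_neighbour_colour_2[OF xV f1 i r False] .
    then have "line_dir (?x(i := r)) \<noteq> i"
      using line_dir_fun_upd_back[OF xV i r] f1 by auto
    then show ?thesis
      using fibre_count_across_line[OF y i r f2] False by (simp add: class_size_def)
  qed
  have row: "(\<Sum>r<q. fibre_count y i r 2) = (q - 1) * (p - t)" if i: "i < n" for i
  proof -
    have "?x i < q" using xV i by (simp add: hvert_def)
    have "(\<Sum>r<q. fibre_count y i r 2) = (\<Sum>r\<in>{r. r < q \<and> r \<noteq> ?x i}. p - t)"
      by (simp add: fibre[OF i] sum.If_cases Int_def)
    also have "\<dots> = (q - 1) * (p - t)"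
      using card_other_values[OF \<open>?x i < q\<close>] by simp
    finally show ?thesis .
  qed
  have "card {z \<in> W. hadj n y z \<and> lift z = 2} = n * ((q - 1) * (p - t))"
    using card_lift_neighbours[OF y] row by simp
  also have "\<dots> = (q^2 - 1) * (p - t)"
    by (simp only: power2_minus_1_nat mult.assoc)
  finally show ?thesis .
qed

lemma fibre_count_off_line:
  assumes y: "y \<in> W" and f2: "f (residues y) = 2" and c: "c = 1 \<or> c = 2" and c_other: "c \<noteq> lift y"
    and i: "i < n" "i \<noteq> line_dir (residues y)" and r: "r < q"
  shows "fibre_count y i r c
       = (if r \<noteq> residues y i \<and> f ((residues y)(i := r)) = 1 then (if c = 1 then p else 0)
          else class_size c)"
proof -
  let ?x = "residues y"
  have xV: "?x \<in> V" by (rule residues_in_V[OF y])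
  consider "r = ?x i" | "r \<noteq> ?x i" "f (?x(i := r)) = 1" | "r \<noteq> ?x i" "f (?x(i := r)) = 2"
    using colour_cases[OF hvert_fun_upd[OF xV i(1) r]] by blast
  then show ?thesis
  proof cases
    case 1
    then show ?thesis
      using fibre_count_across_line[OF y i(1) r _ _ c] f2 i(2) c_other by simp
  next
    case 2
    then show ?thesis
      using fibre_count_colour_1[OF r, of y i] c by auto
  next
    case 3
    then have "line_dir (?x(i := r)) \<noteq> i"
      using line_dir_fun_upd_back[OF xV i(1) r] i(2) by auto
    then show ?thesis
      using fibre_count_across_line[OF y i(1) r _ _ c] 3 by simp
  qed
qed

(* Off the line through the residues exactly one fibre, the one over the unique colour-1
   neighbour of the residues, has colour 1 throughout; each of the other q^2 - 1 fibres
   meets the colour class c in class_size c vertices. *)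
lemma card_lift_neighbours_residue_colour_2:
  assumes y: "y \<in> W" and f2: "f (residues y) = 2" and c: "c = 1 \<or> c = 2" and c_other: "c \<noteq> lift y"
  shows "card {z \<in> W. hadj n y z \<and> lift z = c}
       = class_size c * (q * q - 1) + (if c = 1 then p else 0)"
proof -
  define x where "x = residues y"
  define d where "d = line_dir x"
  define D where "D = ({..<n} - {d}) \<times> {..<q}"
  define Q where "Q = {(i, r) \<in> D. r \<noteq> x i \<and> f (x(i := r)) = 1}"
  define \<rho> where "\<rho> = (if c = 1 then p else 0)"
  have xV: "x \<in> V" and fx: "f x = 2"
    using residues_in_V[OF y] f2 by (simp_all add: x_def)
  have d: "d < n" and d_in: "d \<in> {..<n}"
    using line_dir_in_partition[OF xV fx] by (simp_all add: d_def)
  have on_line: "(\<Sum>r<q. fibre_count y d r c) = 0"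
    using fibre_count_along_line[OF y d] colour_2_along_line[OF xV fx] line_dir_along_line[OF xV fx]
      c_other by (simp add: x_def d_def)
  have off_line: "fibre_count y i r c = (if (i, r) \<in> Q then \<rho> else class_size c)"
    if "(i, r) \<in> D" for i r
    using fibre_count_off_line[OF y f2 c c_other, of i r] that
    by (simp add: D_def Q_def \<rho>_def x_def d_def)
  have "Q = (SIGMA i:{..<n}. {r. r < q \<and> r \<noteq> x i \<and> f (x(i := r)) = 1})"
    using colour_2_along_line[OF xV fx] by (auto simp: Q_def D_def d_def)
  then have card_Q: "card Q = 1"
    using card_colour_1_neighbours[OF xV fx] by (simp add: card_SigmaI)
  have card_D: "card D = q * q"
    using d_in by (simp add: D_def card_cartesian_product)
  have "Q \<subseteq> D" "finite D" by (auto simp: Q_def D_def)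
  then have "finite Q" by (rule finite_subset)
  have "card {z \<in> W. hadj n y z \<and> lift z = c}
      = (\<Sum>r<q. fibre_count y d r c) + (\<Sum>i\<in>{..<n} - {d}. \<Sum>r<q. fibre_count y i r c)"
    using card_lift_neighbours[OF y] sum.remove[OF _ d_in] by simp
  also have "\<dots> = (\<Sum>(i, r)\<in>D. if (i, r) \<in> Q then \<rho> else class_size c)"
    using on_line off_line by (simp add: D_def sum.cartesian_product)
  also have "\<dots> = \<rho> * card Q + class_size c * card (D - Q)"
    using \<open>Q \<subseteq> D\<close> \<open>finite D\<close> by (simp add: sum.If_cases Int_absorb1 Diff_eq)
  also have "\<dots> = class_size c * (q * q - 1) + \<rho>"
    using card_Q card_D \<open>Q \<subseteq> D\<close> \<open>finite Q\<close> by (simp add: card_Diff_subset)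
  finally show ?thesis
    by (simp add: \<rho>_def)
qed

lemma ex_lift_colour_2: "\<exists>y\<in>W. lift y = 2"
proof -
  obtain x where x: "x \<in> V" "f x = 2"
    using ex_colour by blast
  define d where "d = line_dir x"
  define j where "j = (if d = 0 then 1 else (0::nat))"
  define y where "y = x(j := q * t + x j)"
  have j: "j < n" "d \<noteq> j" using q_pos by (auto simp: j_def)
  have xj: "x j < q" using x j by (simp add: hvert_def)
  have "q * t + x j < p * q"
    using xj t_less_p mult_le_mono1[of "Suc t" p q] by (simp add: mult.commute)
  then have "y \<in> W"
    unfolding y_def using V_subset_W x(1) j(1) by (intro hvert_fun_upd) auto
  have "residues y = x"
    using residues_fun_upd[OF xj, of x j t] residues_id[OF x(1)] by (simp add: y_def)
  moreover have "div_sum y d = t"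
  proof -
    have "(\<Sum>i\<in>{..<n} - {d} - {j}. x i div q) = 0"
      using x(1) by (auto simp: hvert_def)
    then show ?thesis
      using div_sum_fun_upd_other[OF j(1) j(2) xj] by (simp add: y_def)
  qed
  ultimately have "lift y = 2"
    using x t_less_p by (simp add: lift_def d_def)
  with \<open>y \<in> W\<close> show ?thesis by blast
qed

lemma lift_image: "lift ` W = {1, 2}"
proof
  show "lift ` W \<subseteq> {1, 2}"
    using lift_cases by auto
  obtain x where "x \<in> V" "f x = 1"
    using ex_colour by blast
  then have "x \<in> W" "lift x = 1"
    using V_subset_W residues_id by (auto simp: lift_def)
  obtain y where "y \<in> W" "lift y = 2"
    using ex_lift_colour_2 by blast
  have "lift x \<in> lift ` W" "lift y \<in> lift ` W"
    using \<open>x \<in> W\<close> \<open>y \<in> W\<close> by simp_all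
  then show "{1, 2} \<subseteq> lift ` W"
    using \<open>lift x = 1\<close> \<open>lift y = 2\<close> by simp
qed

lemma lift_is_coloring: "is_coloring n (p * q) ((q^2 - 1) * (p - t)) ((q^2 - 1) * t + p) lift"
  unfolding is_coloring_def
proof (intro conjI ballI impI)
  show "lift ` W = {1, 2}" by (rule lift_image)
next
  fix y assume y: "y \<in> W" and "lift y = 1"
  show "card {z \<in> W. hadj n y z \<and> lift z = 2} = (q^2 - 1) * (p - t)"
  proof (cases "f (residues y) = 1")
    case True
    then show ?thesis by (rule card_lift_neighbours_residue_colour_1[OF y])
  next
    case False
    then have "f (residues y) = 2" using colour_cases[OF residues_in_V[OF y]] by simp
    with y \<open>lift y = 1\<close> show ?thesis
      using card_lift_neighbours_residue_colour_2[of y 2]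
      by (simp add: class_size_def power2_eq_square mult.commute)
  qed
next
  fix y assume y: "y \<in> W" and "lift y = 2"
  then have "f (residues y) = 2"
    using colour_cases[OF residues_in_V[OF y]] by (auto simp: lift_def split: if_splits)
  with y \<open>lift y = 2\<close> show "card {z \<in> W. hadj n y z \<and> lift z = 1} = (q^2 - 1) * t + p"
    using card_lift_neighbours_residue_colour_2[of y 1]
    by (simp add: class_size_def power2_eq_square mult.commute)
qed

end

lemma main_eigenvalue_lifted:
  assumes "0 < q" "t \<le> p"
  shows "main_eigenvalue (q + 1) (p * q) ((q^2 - 1) * (p - t)) ((q^2 - 1) * t + p)
       = int q * (int p - 1) - 1"
proof -
  have q2: "int (q^2 - 1) = int q * int q - 1" and pt: "int (p - t) = int p - int t"
    using assms by (simp_all add: of_nat_diff power2_eq_square)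
  have "main_eigenvalue (q + 1) (p * q) ((q^2 - 1) * (p - t)) ((q^2 - 1) * t + p)
      = (int q + 1) * (int p * int q - 1)
        - ((int q * int q - 1) * (int p - int t) + ((int q * int q - 1) * int t + int p))"
    unfolding main_eigenvalue_def by (simp only: of_nat_add of_nat_mult of_nat_1 q2 pt)
  also have "\<dots> = int q * (int p - 1) - 1"
    by (simp add: algebra_simps)
  finally show ?thesis .
qed

theorem theorem8:
  fixes q :: nat and f :: "(nat \<Rightarrow> nat) \<Rightarrow> nat"
  assumes "q \<ge> 2"
    and "is_coloring (q + 1) q (q^2 - 1) 1 f"
    and "perfect_code (q + 1) q {x \<in> hvert (q + 1) q. f x = 1}"
    and "partitionable_into_lines (q + 1) q {x \<in> hvert (q + 1) q. f x = 2}"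
  shows "\<forall>p t. 0 < p \<and> t < p \<longrightarrow>
           (\<exists>g. is_coloring (q + 1) (p * q) ((q^2 - 1) * (p - t)) ((q^2 - 1) * t + p) g)
           \<and> main_eigenvalue (q + 1) (p * q) ((q^2 - 1) * (p - t)) ((q^2 - 1) * t + p)
               = int q * (int p - 1) - 1"
proof (intro allI impI conjI)
  fix p t :: nat
  assume pt: "0 < p \<and> t < p"
  obtain P where lines: "\<forall>L\<in>P. is_line (q + 1) q L"
    and disjoint: "\<forall>L1\<in>P. \<forall>L2\<in>P. L1 \<noteq> L2 \<longrightarrow> L1 \<inter> L2 = {}"
    and union: "\<Union>P = {x \<in> hvert (q + 1) q. f x = 2}"
    using assms(4) unfolding partitionable_into_lines_def by (elim exE conjE)
  interpret lifted_coloring q f P p t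
    by unfold_locales (use assms(2) lines disjoint union pt in simp_all)
  show "\<exists>g. is_coloring (q + 1) (p * q) ((q^2 - 1) * (p - t)) ((q^2 - 1) * t + p) g"
    using lift_is_coloring by blast
next
  fix p t :: nat
  assume "0 < p \<and> t < p"
  with assms(1) show "main_eigenvalue (q + 1) (p * q) ((q^2 - 1) * (p - t)) ((q^2 - 1) * t + p)
      = int q * (int p - 1) - 1"
    by (intro main_eigenvalue_lifted) simp_all
qed

end
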